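(* Let $W,M$ be disjoint with $|W|=|M|=n$, and let $\succ_W\in\mathcal F(W,M)$ and $\succ_M\in\mathcal F(M,W)$. Every algorithm for finding a stable marriage, or for verifying the stability of a marriage (when given as input a marriage that is stable with respect to $\succ_W,\succ_M$), that performs only pairwise-comparison queries onto $W$ (and arbitrary queries onto $M$), performs, on input $\succ_W,\succ_M$, at least as many queries onto $W$ as the men-proposing deferred-acceptance algorithm performs on input $\succ_W,\succ_M$.
   Context: $\mathcal F(W,M)$ is the set of profiles assigning each woman a total order on $M$; $\mathcal F(M,W)$ analogously for men. A perfect marriage is a bijection between $W$ and $M$; a pair $(w,m)$ is blocking for $\mu$ if $w$ prefers $m$ to her spouse in $\mu$ and $m$ prefers $w$ to his spouse in $\mu$; $\mu$ is stable if it has no blocking pair. A pairwise-comparison query onto $W$ asks whether $m\succ_w m'$ for given $w\in W$, $m,m'\in M$. The men-proposing deferred-acceptance algorithm: initially everyone is provisionally single. While some man is provisionally single, pick an arbitrary provisionally single man $m$; he proposes to the highest-ranked woman $w$ on his list who has not yet rejected him. If $w$ is provisionally single, $m$ and $w$ become provisionally married. Otherwise $w$ is provisionally married to some $m'$, and one pairwise-comparison query onto $w$ is made: if $m\succ_w m'$, $w$ rejects $m'$ (who becomes provisionally single) and becomes provisionally married to $m$; else $w$ rejects $m$. When no man is provisionally single, the provisional couples form the output. (All runs on a given input make the same number of queries onto $W$.) *)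

theory Defs
  imports Main "HOL-Library.Cardinality"
begin

text \<open>A preference profile of agents of type 'a over agents of type 'b assigns to
  each agent a a strict total order P a on 'b; (x, y) \<in> P a means x \<succ>_a y.\<close>
definition pref_profiles :: "('a \<Rightarrow> ('b \<times> 'b) set) set" where
  "pref_profiles = {P. \<forall>a. strict_linear_order (P a)}"

definition blocking :: "('w \<Rightarrow> ('m \<times> 'm) set) \<Rightarrow> ('m \<Rightarrow> ('w \<times> 'w) set) \<Rightarrow> ('w \<Rightarrow> 'm) \<Rightarrow> 'w \<Rightarrow> 'm \<Rightarrow> bool" where
  "blocking PW PM mu w m \<longleftrightarrow> (m, mu w) \<in> PW w \<and> (w, inv mu m) \<in> PM m"

definition stable :: "('w \<Rightarrow> ('m \<times> 'm) set) \<Rightarrow> ('m \<Rightarrow> ('w \<times> 'w) set) \<Rightarrow> ('w \<Rightarrow> 'm) \<Rightarrow> bool" where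
  "stable PW PM mu \<longleftrightarrow> bij mu \<and> (\<forall>w m. \<not> blocking PW PM mu w m)"

datatype ('w, 'm, 'r) dtree = Leaf 'r | Query 'w 'm 'm "('w, 'm, 'r) dtree" "('w, 'm, 'r) dtree"

fun run_tree :: "('w \<Rightarrow> ('m \<times> 'm) set) \<Rightarrow> ('w, 'm, 'r) dtree \<Rightarrow> 'r" where
  "run_tree PW (Leaf r) = r"
| "run_tree PW (Query w m m' t f) = (if (m, m') \<in> PW w then run_tree PW t else run_tree PW f)"

fun num_queries :: "('w \<Rightarrow> ('m \<times> 'm) set) \<Rightarrow> ('w, 'm, 'r) dtree \<Rightarrow> nat" where
  "num_queries PW (Leaf r) = 0"
| "num_queries PW (Query w m m' t f) =
     Suc (if (m, m') \<in> PW w then num_queries PW t else num_queries PW f)"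

text \<open>An algorithm may make arbitrary (uncounted) queries onto M, so it is modelled as a
  family of decision trees indexed by the men's profile (and by the input marriage for verifiers).\<close>
definition finds_stable :: "(('m \<Rightarrow> ('w \<times> 'w) set) \<Rightarrow> ('w, 'm, 'w \<Rightarrow> 'm) dtree) \<Rightarrow> bool" where
  "finds_stable alg \<longleftrightarrow>
     (\<forall>PW \<in> pref_profiles. \<forall>PM \<in> pref_profiles. stable PW PM (run_tree PW (alg PM)))"

definition verifies_stability :: "(('m \<Rightarrow> ('w \<times> 'w) set) \<Rightarrow> ('w \<Rightarrow> 'm) \<Rightarrow> ('w, 'm, bool) dtree) \<Rightarrow> bool" where
  "verifies_stability ver \<longleftrightarrow>
     (\<forall>PW \<in> pref_profiles. \<forall>PM \<in> pref_profiles. \<forall>mu. bij mu \<longrightarrow>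
        run_tree PW (ver PM mu) = stable PW PM mu)"

text \<open>Men-proposing deferred acceptance. State: (provisional wife of each man,
  set of pairs (m, w) such that w has rejected m, number of queries onto W so far).\<close>
type_synonym ('w, 'm) da_state = "('m \<Rightarrow> 'w option) \<times> ('m \<times> 'w) set \<times> nat"

definition da_top :: "('m \<Rightarrow> ('w \<times> 'w) set) \<Rightarrow> ('m \<times> 'w) set \<Rightarrow> 'm \<Rightarrow> 'w \<Rightarrow> bool" where
  "da_top PM rej m w \<longleftrightarrow> (m, w) \<notin> rej \<and> (\<forall>w'. (m, w') \<notin> rej \<longrightarrow> w' \<noteq> w \<longrightarrow> (w, w') \<in> PM m)"

inductive da_step :: "('w \<Rightarrow> ('m \<times> 'm) set) \<Rightarrow> ('m \<Rightarrow> ('w \<times> 'w) set)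
    \<Rightarrow> ('w, 'm) da_state \<Rightarrow> ('w, 'm) da_state \<Rightarrow> bool" for PW PM where
  propose_single:
    "\<lbrakk> eng m = None; da_top PM rej m w; \<forall>m'. eng m' \<noteq> Some w \<rbrakk>
     \<Longrightarrow> da_step PW PM (eng, rej, q) (eng(m := Some w), rej, q)"
| propose_accept:
    "\<lbrakk> eng m = None; da_top PM rej m w; eng m' = Some w; (m, m') \<in> PW w \<rbrakk>
     \<Longrightarrow> da_step PW PM (eng, rej, q) (eng(m := Some w, m' := None), insert (m', w) rej, Suc q)"
| propose_reject:
    "\<lbrakk> eng m = None; da_top PM rej m w; eng m' = Some w; (m, m') \<notin> PW w \<rbrakk>
     \<Longrightarrow> da_step PW PM (eng, rej, q) (eng, insert (m, w) rej, Suc q)"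

definition da_final :: "('w, 'm) da_state \<Rightarrow> bool" where
  "da_final s \<longleftrightarrow> (\<forall>m. fst s m \<noteq> None)"

definition da_queries :: "('w \<Rightarrow> ('m \<times> 'm) set) \<Rightarrow> ('m \<Rightarrow> ('w \<times> 'w) set) \<Rightarrow> nat \<Rightarrow> bool" where
  "da_queries PW PM k \<longleftrightarrow>
     (\<exists>s. (da_step PW PM)\<^sup>*\<^sup>* (\<lambda>_. None, {}, 0) s \<and> da_final s \<and> snd (snd s) = k)"

end

theory Submission
  imports Defs
begin

text \<open>Every rejection (m, w) made by men-proposing deferred acceptance forces one distinct
  answered query in any algorithm that certifies a stable marriage \<mu>. Deferred acceptance never
  rejects a man by his stable partner and each man proposes in order of preference, so a rejected
  man m prefers w to his partner in \<mu>, while w is not married to m in \<mu>. If the algorithm never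
  learnt that w prefers some man to m, moving m to the top of w's list leaves all its answers,
  hence its run, unchanged, but makes (w, m) a blocking pair. The revealed comparisons
  (w, x, m) for distinct rejections (m, w) are distinct, and each query reveals at most one.\<close>

lemma pref_profile_irrefl: "P \<in> pref_profiles \<Longrightarrow> (x, x) \<notin> P a"
  unfolding pref_profiles_def strict_linear_order_on_def irrefl_def by blast

lemma pref_profile_trans:
  "P \<in> pref_profiles \<Longrightarrow> (x, y) \<in> P a \<Longrightarrow> (y, z) \<in> P a \<Longrightarrow> (x, z) \<in> P a"
  unfolding pref_profiles_def strict_linear_order_on_def by (blast dest: transD)

lemma pref_profile_asym: "P \<in> pref_profiles \<Longrightarrow> (x, y) \<in> P a \<Longrightarrow> (y, x) \<notin> P a"
  using pref_profile_irrefl pref_profile_trans by metis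

lemma pref_profile_total:
  "P \<in> pref_profiles \<Longrightarrow> x \<noteq> y \<Longrightarrow> (x, y) \<notin> P a \<Longrightarrow> (y, x) \<in> P a"
  unfolding pref_profiles_def strict_linear_order_on_def total_on_def by blast

fun revealed :: "('w \<Rightarrow> ('m \<times> 'm) set) \<Rightarrow> ('w, 'm, 'r) dtree \<Rightarrow> ('w \<times> 'm \<times> 'm) set" where
  "revealed PW (Leaf r) = {}"
| "revealed PW (Query w m m' t f) =
     (if (m, m') \<in> PW w then insert (w, m, m') (revealed PW t)
      else (if (m', m) \<in> PW w then {(w, m', m)} else {}) \<union> revealed PW f)"

lemma finite_revealed: "finite (revealed PW T)"
  by (induction T) auto

lemma revealed_sound: "(w, x, y) \<in> revealed PW T \<Longrightarrow> (x, y) \<in> PW w"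
  by (induction T) (auto split: if_splits)

lemma card_revealed_le_num_queries: "card (revealed PW T) \<le> num_queries PW T"
proof (induction T)
  case (Query w m m' t f)
  let ?new = "if (m', m) \<in> PW w then {(w, m', m)} else {}"
  have "card (?new \<union> revealed PW f) \<le> 1 + card (revealed PW f)"
    using card_Un_le[of ?new "revealed PW f"] by (auto split: if_splits)
  with Query finite_revealed[of PW t] show ?case
    by (auto simp: card_insert_if)
qed simp

lemma run_tree_cong_revealed:
  assumes "PW \<in> pref_profiles" "PW' \<in> pref_profiles"
    and "\<And>w x y. (w, x, y) \<in> revealed PW T \<Longrightarrow> (x, y) \<in> PW' w"
  shows "run_tree PW' T = run_tree PW T"
  using assms(3)
proof (induction T)
  case (Query w m m' t f)
  show ?case
  proof (cases "(m, m') \<in> PW w")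
    case False
    have "(m, m') \<notin> PW' w"
    proof (cases "m = m'")
      case False
      with \<open>(m, m') \<notin> PW w\<close> have "(m', m) \<in> PW w"
        using pref_profile_total assms(1) by metis
      then have "(m', m) \<in> PW' w" using Query.prems \<open>(m, m') \<notin> PW w\<close> by auto
      then show ?thesis using pref_profile_asym assms(2) by metis
    qed (use pref_profile_irrefl assms(2) in metis)
    with False Query show ?thesis by auto
  qed (use Query in auto)
qed simp

definition promote :: "('a \<times> 'a) set \<Rightarrow> 'a \<Rightarrow> ('a \<times> 'a) set" where
  "promote R a = {(x, y). x \<noteq> y \<and> (x = a \<or> (y \<noteq> a \<and> (x, y) \<in> R))}"

lemma strict_linear_order_promote:
  assumes "strict_linear_order R"
  shows "strict_linear_order (promote R a)"
proof -
  have "trans R" "irrefl R" "total R"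
    using assms unfolding strict_linear_order_on_def by auto
  then show ?thesis
    unfolding strict_linear_order_on_def promote_def trans_def irrefl_def total_on_def
    by blast
qed

lemma pref_profiles_promote:
  "PW \<in> pref_profiles \<Longrightarrow> PW(w := promote (PW w) m) \<in> pref_profiles"
  unfolding pref_profiles_def by (simp add: strict_linear_order_promote)

abbreviation da_reachable :: "('w \<Rightarrow> ('m \<times> 'm) set) \<Rightarrow> ('m \<Rightarrow> ('w \<times> 'w) set)
    \<Rightarrow> ('w, 'm) da_state \<Rightarrow> bool" where
  "da_reachable PW PM s \<equiv> (da_step PW PM)\<^sup>*\<^sup>* (\<lambda>_. None, {}, 0) s"

definition rejections_ordered :: "('m \<Rightarrow> ('w \<times> 'w) set) \<Rightarrow> ('m \<times> 'w) set \<Rightarrow> bool" where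
  "rejections_ordered PM rej \<longleftrightarrow>
     (\<forall>m w w'. (m, w) \<in> rej \<longrightarrow> (m, w') \<notin> rej \<longrightarrow> (w, w') \<in> PM m)"

definition da_inv :: "('m \<Rightarrow> ('w \<times> 'w) set) \<Rightarrow> ('w, 'm) da_state \<Rightarrow> bool" where
  "da_inv PM s \<longleftrightarrow> (case s of (eng, rej, q) \<Rightarrow>
     (\<forall>m w. eng m = Some w \<longrightarrow> da_top PM rej m w) \<and> rejections_ordered PM rej
     \<and> finite rej \<and> q = card rej)"

lemma da_top_not_rejected: "da_top PM rej m w \<Longrightarrow> (m, w) \<notin> rej"
  unfolding da_top_def by simp

lemma da_top_insert_other: "m \<noteq> m' \<Longrightarrow> da_top PM (insert (m', w') rej) m w = da_top PM rej m w"
  unfolding da_top_def by auto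

lemma rejections_ordered_insert:
  "rejections_ordered PM rej \<Longrightarrow> da_top PM rej m w \<Longrightarrow> rejections_ordered PM (insert (m, w) rej)"
  unfolding rejections_ordered_def da_top_def by blast

lemma da_inv_step:
  assumes "da_step PW PM s s'" "da_inv PM s"
  shows "da_inv PM s'"
  using assms
proof (induction rule: da_step.induct)
  case (propose_single eng m rej w q)
  then show ?case unfolding da_inv_def by auto
next
  case (propose_accept eng m rej w m' q)
  then have "m \<noteq> m'" "da_top PM rej m' w"
    unfolding da_inv_def by auto
  moreover from this have "(m', w) \<notin> rej" by (simp add: da_top_not_rejected)
  ultimately show ?case using propose_accept
    unfolding da_inv_def by (auto simp: da_top_insert_other rejections_ordered_insert)
next
  case (propose_reject eng m rej w m' q)
  then have "\<forall>x y. eng x = Some y \<longrightarrow> x \<noteq> m \<and> da_top PM rej x y"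
    unfolding da_inv_def by auto
  with propose_reject show ?case
    unfolding da_inv_def
    by (auto simp: da_top_insert_other rejections_ordered_insert da_top_not_rejected)
qed

lemma da_inv_reachable: "da_reachable PW PM s \<Longrightarrow> da_inv PM s"
proof (induction rule: rtranclp_induct)
  case base
  then show ?case unfolding da_inv_def rejections_ordered_def by simp
qed (rule da_inv_step)

lemma stable_no_preferred_proposer:
  assumes "stable PW PM mu" "PW \<in> pref_profiles"
    and "\<forall>m. (m, inv mu m) \<notin> rej" "da_top PM rej x w" "(x, mu w) \<in> PW w"
  shows False
proof -
  have "bij mu" using assms(1) unfolding stable_def by simp
  have "x \<noteq> mu w" using assms(5) pref_profile_irrefl[OF assms(2)] by metis
  then have "inv mu x \<noteq> w" using \<open>bij mu\<close> by (metis bij_inv_eq_iff)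
  with assms(3,4) have "(w, inv mu x) \<in> PM x" unfolding da_top_def by blast
  with assms(5) have "blocking PW PM mu w x" unfolding blocking_def by simp
  with assms(1) show False unfolding stable_def by blast
qed

lemma da_step_keeps_stable_partners:
  assumes "da_step PW PM s s'" "da_inv PM s" "\<forall>m. (m, inv mu m) \<notin> fst (snd s)"
    and "stable PW PM mu" "PW \<in> pref_profiles"
  shows "\<forall>m. (m, inv mu m) \<notin> fst (snd s')"
  using assms(1-3)
proof (induction rule: da_step.induct)
  case (propose_accept eng m rej w m' q)
  have "mu w \<noteq> m'"
  proof
    assume "mu w = m'"
    with propose_accept show False
      using stable_no_preferred_proposer[OF assms(4,5), of rej m w] by simp
  qed
  then have "inv mu m' \<noteq> w"
    using assms(4) unfolding stable_def by (metis bij_inv_eq_iff)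
  with propose_accept show ?case by auto
next
  case (propose_reject eng m rej w m' q)
  have "m \<noteq> m'" using propose_reject by auto
  with propose_reject have "(m', m) \<in> PW w"
    using pref_profile_total[OF assms(5)] by metis
  moreover have "da_top PM rej m' w" using propose_reject unfolding da_inv_def by auto
  ultimately have "mu w \<noteq> m"
    using stable_no_preferred_proposer[OF assms(4,5), of rej m' w] propose_reject by force
  then have "inv mu m \<noteq> w"
    using assms(4) unfolding stable_def by (metis bij_inv_eq_iff)
  with propose_reject show ?case by auto
qed simp

lemma da_never_rejects_stable_partner:
  assumes "da_reachable PW PM s" "stable PW PM mu" "PW \<in> pref_profiles"
  shows "(m, inv mu m) \<notin> fst (snd s)"
proof -
  have "\<forall>m. (m, inv mu m) \<notin> fst (snd s)"
    using assms(1)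
  proof (induction rule: rtranclp_induct)
    case (step s s')
    then show ?case
      using da_step_keeps_stable_partners da_inv_reachable assms(2,3) by blast
  qed simp
  then show ?thesis by blast
qed

definition certifies_stable ::
    "('w \<Rightarrow> ('m \<times> 'm) set) \<Rightarrow> ('m \<Rightarrow> ('w \<times> 'w) set) \<Rightarrow> ('w, 'm, 'r) dtree \<Rightarrow> ('w \<Rightarrow> 'm) \<Rightarrow> bool" where
  "certifies_stable PW PM T mu \<longleftrightarrow>
     (\<forall>PW' \<in> pref_profiles. run_tree PW' T = run_tree PW T \<longrightarrow> stable PW' PM mu)"

lemma finds_stable_certifies:
  assumes "finds_stable alg" "PW \<in> pref_profiles" "PM \<in> pref_profiles"
  shows "certifies_stable PW PM (alg PM) (run_tree PW (alg PM))"
  using assms unfolding finds_stable_def certifies_stable_def by metis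

lemma verifies_stability_certifies:
  assumes "verifies_stability ver" "PW \<in> pref_profiles" "PM \<in> pref_profiles"
    and "stable PW PM mu"
  shows "certifies_stable PW PM (ver PM mu) mu"
  using assms unfolding verifies_stability_def certifies_stable_def stable_def by metis

lemma da_rejection_revealed:
  assumes "da_reachable PW PM s" "PW \<in> pref_profiles"
    and cert: "certifies_stable PW PM T mu"
    and "(m, w) \<in> fst (snd s)"
  shows "\<exists>x. (w, x, m) \<in> revealed PW T"
proof (rule ccontr)
  assume unrevealed: "\<nexists>x. (w, x, m) \<in> revealed PW T"
  have "stable PW PM mu" using cert assms(2) unfolding certifies_stable_def by blast
  then have "bij mu" unfolding stable_def by simp
  have partner: "(m, inv mu m) \<notin> fst (snd s)"
    by (rule da_never_rejects_stable_partner[OF assms(1) \<open>stable PW PM mu\<close> assms(2)])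
  then have "(w, inv mu m) \<in> PM m"
    using da_inv_reachable[OF assms(1)] assms(4)
    unfolding da_inv_def rejections_ordered_def by (auto split: prod.splits)
  have "mu w \<noteq> m"
    using partner assms(4) \<open>bij mu\<close> by (metis bij_inv_eq_iff)
  define PW' where "PW' = PW(w := promote (PW w) m)"
  have PW': "PW' \<in> pref_profiles" unfolding PW'_def by (rule pref_profiles_promote[OF assms(2)])
  have "run_tree PW' T = run_tree PW T"
  proof (rule run_tree_cong_revealed[OF assms(2) PW'])
    fix w0 x y assume "(w0, x, y) \<in> revealed PW T"
    moreover from this have "(x, y) \<in> PW w0" by (rule revealed_sound)
    ultimately show "(x, y) \<in> PW' w0"
      using unrevealed pref_profile_irrefl[OF assms(2)]
      unfolding PW'_def promote_def by auto
  qed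
  with cert PW' have "stable PW' PM mu" unfolding certifies_stable_def by blast
  moreover have "blocking PW' PM mu w m"
    unfolding blocking_def PW'_def promote_def using \<open>mu w \<noteq> m\<close> \<open>(w, inv mu m) \<in> PM m\<close> by auto
  ultimately show False unfolding stable_def by blast
qed

lemma da_queries_le_num_queries:
  assumes "da_queries PW PM k" "PW \<in> pref_profiles" "certifies_stable PW PM T mu"
  shows "k \<le> num_queries PW T"
proof -
  obtain eng rej where reach: "da_reachable PW PM (eng, rej, k)"
    using assms(1) unfolding da_queries_def by auto
  then have "k = card rej" using da_inv_reachable unfolding da_inv_def by fastforce
  have "rej \<subseteq> (\<lambda>(w, x, m). (m, w)) ` revealed PW T"
    using da_rejection_revealed[OF reach assms(2,3)] by force
  then have "card rej \<le> card ((\<lambda>(w, x, m). (m, w)) ` revealed PW T)"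
    by (intro card_mono finite_imageI finite_revealed)
  also have "\<dots> \<le> card (revealed PW T)" by (intro card_image_le finite_revealed)
  also have "\<dots> \<le> num_queries PW T" by (rule card_revealed_le_num_queries)
  finally show ?thesis using \<open>k = card rej\<close> by simp
qed

theorem theorem30:
  fixes PW :: "'w::finite \<Rightarrow> ('m::finite \<times> 'm) set"
    and PM :: "'m \<Rightarrow> ('w \<times> 'w) set"
  assumes "CARD('w) = CARD('m)"
    and "PW \<in> pref_profiles" and "PM \<in> pref_profiles"
  shows "(\<forall>alg. finds_stable alg \<longrightarrow>
            (\<forall>k. da_queries PW PM k \<longrightarrow> k \<le> num_queries PW (alg PM)))
       \<and> (\<forall>ver mu. verifies_stability ver \<longrightarrow> stable PW PM mu \<longrightarrow>
            (\<forall>k. da_queries PW PM k \<longrightarrow> k \<le> num_queries PW (ver PM mu)))"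
proof (intro conjI allI impI)
  fix alg :: "('m \<Rightarrow> ('w \<times> 'w) set) \<Rightarrow> ('w, 'm, 'w \<Rightarrow> 'm) dtree" and k
  assume "finds_stable alg" "da_queries PW PM k"
  then show "k \<le> num_queries PW (alg PM)"
    using da_queries_le_num_queries finds_stable_certifies assms(2,3) by blast
next
  fix ver :: "('m \<Rightarrow> ('w \<times> 'w) set) \<Rightarrow> ('w \<Rightarrow> 'm) \<Rightarrow> ('w, 'm, bool) dtree" and mu k
  assume "verifies_stability ver" "stable PW PM mu" "da_queries PW PM k"
  then show "k \<le> num_queries PW (ver PM mu)"
    using da_queries_le_num_queries verifies_stability_certifies assms(2,3) by blast
qed

end
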